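(* Let $r\le s$, $M$ the space of complex $r\times s$ matrices, and $\lambda,\lambda'$ pre-partitions of length at most $r$ with associated orbits $O_\lambda,O_{\lambda'}\subset M_\infty$. If $O_{\lambda'}$ is contained in the Zariski closure of $O_\lambda$, then $\lambda\lhd\lambda'$, i.e. $\lambda_i+\dots+\lambda_r\le\lambda'_i+\dots+\lambda'_r$ for all $i$.
   Context: The $\mathbb{C}$-points of the arc space $M_\infty$ are $r\times s$ matrices over $\mathbb{C}[[t]]$, acted on by $G_\infty$, $G=GL_r\times GL_s$, via $(g,h)\cdot A=gAh^{-1}$. A pre-partition of length at most $r$ is $\lambda_1\ge\dots\ge\lambda_r\ge0$ in $\mathbb N\cup\{\infty\}$ (with $\infty>n$, $\infty+n=\infty$). $\delta_\lambda$ is the $r\times s$ matrix with first $s-r$ columns zero and last $r$ columns $\mathrm{diag}(t^{\lambda_1},\dots,t^{\lambda_r})$ ($t^\infty=0$), and $O_\lambda=G_\infty\cdot\delta_\lambda$. *)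

theory Defs
  imports "Jordan_Normal_Form.Matrix" "HOL-Computational_Algebra.Formal_Power_Series"
    "HOL-Library.Extended_Nat"
begin

text \<open>C-points of the arc space M_infinity of r x s complex matrices:
  r x s matrices over C[[t]], i.e. elements of carrier_mat r s of type complex fps mat.\<close>

definition arc_matrices :: "nat \<Rightarrow> nat \<Rightarrow> complex fps mat set" where
  "arc_matrices r s = carrier_mat r s"

text \<open>Regular (polynomial) functions on M_infinity: the polynomial ring generated by the
  coordinate functions A |-> (coefficient of t^k in the entry A_(i,j)).\<close>

inductive_set arc_poly_fun :: "nat \<Rightarrow> nat \<Rightarrow> (complex fps mat \<Rightarrow> complex) set"
  for r s :: nat where
  const: "(\<lambda>A. c) \<in> arc_poly_fun r s"
| coord: "i < r \<Longrightarrow> j < s \<Longrightarrow> (\<lambda>A. fps_nth (A $$ (i, j)) k) \<in> arc_poly_fun r s"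
| add: "f \<in> arc_poly_fun r s \<Longrightarrow> g \<in> arc_poly_fun r s \<Longrightarrow> (\<lambda>A. f A + g A) \<in> arc_poly_fun r s"
| mult: "f \<in> arc_poly_fun r s \<Longrightarrow> g \<in> arc_poly_fun r s \<Longrightarrow> (\<lambda>A. f A * g A) \<in> arc_poly_fun r s"

definition zariski_closure_arc :: "nat \<Rightarrow> nat \<Rightarrow> complex fps mat set \<Rightarrow> complex fps mat set" where
  "zariski_closure_arc r s S =
     {A \<in> arc_matrices r s. \<forall>f \<in> arc_poly_fun r s. (\<forall>B \<in> S. f B = 0) \<longrightarrow> f A = 0}"

text \<open>Pre-partitions of length at most r, indexed 0..r-1 (lambda_1 = lam 0, ...),
  values in N \<union> {\<infinity>} (enat; \<infinity> + n = \<infinity>).\<close>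

definition pre_partition :: "nat \<Rightarrow> (nat \<Rightarrow> enat) \<Rightarrow> bool" where
  "pre_partition r lam \<longleftrightarrow> (\<forall>i j. i \<le> j \<longrightarrow> j < r \<longrightarrow> lam j \<le> lam i)"

definition tpow :: "enat \<Rightarrow> complex fps" where
  "tpow e = (case e of enat n \<Rightarrow> fps_X ^ n | \<infinity> \<Rightarrow> 0)"

definition delta_mat :: "nat \<Rightarrow> nat \<Rightarrow> (nat \<Rightarrow> enat) \<Rightarrow> complex fps mat" where
  "delta_mat r s lam = mat r s (\<lambda>(i, j). if s - r \<le> j \<and> j - (s - r) = i then tpow (lam i) else 0)"

text \<open>O_lambda = G_infinity . delta_lambda, with (g,h).A = g A h^{-1},
  g in GL_r(C[[t]]), h in GL_s(C[[t]]).\<close>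

definition orbit_arc :: "nat \<Rightarrow> nat \<Rightarrow> (nat \<Rightarrow> enat) \<Rightarrow> complex fps mat set" where
  "orbit_arc r s lam =
     {g * delta_mat r s lam * hinv | g h hinv.
        g \<in> carrier_mat r r \<and> invertible_mat g \<and>
        h \<in> carrier_mat s s \<and> hinv \<in> carrier_mat s s \<and>
        inverts_mat h hinv \<and> inverts_mat hinv h}"

definition tail_dominated :: "nat \<Rightarrow> (nat \<Rightarrow> enat) \<Rightarrow> (nat \<Rightarrow> enat) \<Rightarrow> bool" where
  "tail_dominated r lam lam' \<longleftrightarrow> (\<forall>i < r. (\<Sum>k = i..<r. lam k) \<le> (\<Sum>k = i..<r. lam' k))"

end

theory Submission
  imports Defs "Jordan_Normal_Form.Determinant"
begin

text \<open>Truncate at order a and view an arc A as a linear map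
  (C[t]/t^a)^s \<rightarrow> (C[t]/t^a)^r. Its matrix is a block Toeplitz matrix of coefficients of the
  entries of A, so its minors are regular functions on the arc space. For B = g delta_lam h the map
  factors through the span of the monomials t^l e_i with lam_i \<le> l < a, so every minor larger than
  sum_i max(0, a - lam_i) vanishes on O_lam and hence on its Zariski closure, whereas delta_lam' has
  a minor of size sum_i max(0, a - lam'_i) equal to 1. Comparing these counts at a = lam_i, and at
  a large a when lam_i = \<infinity>, gives the tail inequalities.\<close>

lemma arc_poly_fun_sum:
  assumes "finite I" "\<And>i. i \<in> I \<Longrightarrow> (\<lambda>A. f i A) \<in> arc_poly_fun r s"
  shows "(\<lambda>A. \<Sum>i\<in>I. f i A) \<in> arc_poly_fun r s"
  using assms by (induction I rule: finite_induct) (auto intro: arc_poly_fun.intros)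

lemma arc_poly_fun_prod:
  assumes "finite I" "\<And>i. i \<in> I \<Longrightarrow> (\<lambda>A. f i A) \<in> arc_poly_fun r s"
  shows "(\<lambda>A. \<Prod>i\<in>I. f i A) \<in> arc_poly_fun r s"
  using assms by (induction I rule: finite_induct) (auto intro: arc_poly_fun.intros)

lemma arc_poly_fun_det:
  assumes "\<And>i j. i < n \<Longrightarrow> j < n \<Longrightarrow> (\<lambda>A. F A i j) \<in> arc_poly_fun r s"
  shows "(\<lambda>A. det (mat n n (\<lambda>(i, j). F A i j))) \<in> arc_poly_fun r s"
proof -
  have perm_lt: "p i < n" if "p permutes {0..<n}" "i < n" for p i
    using that permutes_in_image by fastforce
  have "det (mat n n (\<lambda>(i, j). F A i j)) =
      (\<Sum>p\<in>{p. p permutes {0..<n}}. of_int (signof p) * (\<Prod>i = 0..<n. F A i (p i)))" for A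
    by (subst det_def') (auto intro!: sum.cong prod.cong simp: perm_lt)
  moreover have "(\<lambda>A. \<Sum>p\<in>{p. p permutes {0..<n}}. of_int (signof p) * (\<Prod>i = 0..<n. F A i (p i)))
      \<in> arc_poly_fun r s"
    by (intro arc_poly_fun_sum arc_poly_fun.mult arc_poly_fun.const arc_poly_fun_prod assms)
      (auto simp: finite_permutations perm_lt)
  ultimately show ?thesis by simp
qed

lemma det_mult_eq_0_if_inner_dim_less:
  fixes X Y :: "'a :: comm_ring_1 mat"
  assumes X: "X \<in> carrier_mat n q" and Y: "Y \<in> carrier_mat q n" and "q < n"
  shows "det (X * Y) = 0"
proof -
  define X' where "X' = mat n n (\<lambda>(i, j). if j < q then X $$ (i, j) else 0)"
  define Y' where "Y' = mat n n (\<lambda>(i, j). if i < q then Y $$ (i, j) else 0)"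
  have "X * Y = X' * Y'"
  proof (rule eq_matI)
    fix i j assume "i < dim_row (X' * Y')" "j < dim_col (X' * Y')"
    then have i: "i < n" and j: "j < n" by (auto simp: X'_def Y'_def)
    have "(X * Y) $$ (i, j) = (\<Sum>k<q. X $$ (i, k) * Y $$ (k, j))"
      using X Y i j by (simp add: index_mult_mat scalar_prod_def atLeast0LessThan)
    also have "\<dots> = (\<Sum>k<n. (if k < q then X $$ (i, k) else 0) * (if k < q then Y $$ (k, j) else 0))"
      using \<open>q < n\<close> by (intro sum.mono_neutral_cong_left) auto
    also have "\<dots> = (X' * Y') $$ (i, j)"
      using i j by (simp add: X'_def Y'_def index_mult_mat scalar_prod_def atLeast0LessThan)
    finally show "(X * Y) $$ (i, j) = (X' * Y') $$ (i, j)" .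
  qed (use X Y in \<open>auto simp: X'_def Y'_def\<close>)
  moreover have "det Y' = 0"
  proof -
    have zero_prod: "(\<Prod>i = 0..<n. Y' $$ (i, p i)) = 0" if "p permutes {0..<n}" for p
    proof (rule prod_zero[OF _ bexI[of _ "n - 1"]])
      have "p (n - 1) < n"
        using that \<open>q < n\<close> permutes_in_image by fastforce
      then show "Y' $$ (n - 1, p (n - 1)) = 0"
        using \<open>q < n\<close> by (simp add: Y'_def)
    qed (use \<open>q < n\<close> in auto)
    have "Y' \<in> carrier_mat n n"
      by (simp add: Y'_def)
    then show ?thesis
      by (simp add: det_def' zero_prod)
  qed
  moreover have "det (X' * Y') = det X' * det Y'"
    by (rule det_mult) (auto simp: X'_def Y'_def)
  ultimately show ?thesis
    by simp
qed

lemma det_sum_mult_eq_0_if_card_less: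
  fixes F :: "nat \<Rightarrow> 'b \<Rightarrow> 'a :: comm_ring_1"
  assumes "finite S" "card S < n"
  shows "det (mat n n (\<lambda>(p, p'). \<Sum>\<sigma>\<in>S. F p \<sigma> * G \<sigma> p')) = 0"
proof -
  define q where "q = card S"
  obtain e where e: "bij_betw e {0..<q} S"
    using ex_bij_betw_nat_finite[OF assms(1)] q_def by blast
  define X where "X = mat n q (\<lambda>(p, k). F p (e k))"
  define Y where "Y = mat q n (\<lambda>(k, p'). G (e k) p')"
  have "mat n n (\<lambda>(p, p'). \<Sum>\<sigma>\<in>S. F p \<sigma> * G \<sigma> p') = X * Y"
    by (rule eq_matI)
      (auto simp: X_def Y_def index_mult_mat scalar_prod_def sum.reindex_bij_betw[OF e, symmetric])
  then show ?thesis
    using assms(2) det_mult_eq_0_if_inner_dim_less[of X n q Y] by (simp add: X_def Y_def q_def)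
qed

text \<open>For l, l' < a, the (l, l') coefficient of multiplication by f on C[t]/t^a.\<close>

definition fps_toeplitz :: "'a :: comm_semiring_1 fps \<Rightarrow> nat \<Rightarrow> nat \<Rightarrow> 'a" where
  "fps_toeplitz f l l' = (if l' \<le> l then fps_nth f (l - l') else 0)"

lemma fps_toeplitz_mult:
  assumes "l < a"
  shows "fps_toeplitz (f * g) l l' = (\<Sum>l1<a. fps_toeplitz f l l1 * fps_toeplitz g l1 l')"
proof -
  have "(\<Sum>l1<a. fps_toeplitz f l l1 * fps_toeplitz g l1 l') =
      (\<Sum>l1\<in>{l'..l}. fps_nth f (l - l1) * fps_nth g (l1 - l'))"
    using assms by (intro sum.mono_neutral_cong_right) (auto simp: fps_toeplitz_def)
  also have "\<dots> = fps_toeplitz (f * g) l l'"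
  proof (cases "l' \<le> l")
    case True
    have "(\<Sum>l1\<in>{l'..l}. fps_nth f (l - l1) * fps_nth g (l1 - l')) =
        (\<Sum>u = 0..l - l'. fps_nth f u * fps_nth g (l - l' - u))"
      using True by (intro sum.reindex_bij_witness[of _ "\<lambda>u. l - u" "\<lambda>l1. l - l1"]) auto
    then show ?thesis using True by (simp add: fps_toeplitz_def fps_mult_nth)
  qed (simp add: fps_toeplitz_def)
  finally show ?thesis ..
qed

lemma fps_toeplitz_sum: "fps_toeplitz (\<Sum>k\<in>K. f k) l l' = (\<Sum>k\<in>K. fps_toeplitz (f k) l l')"
  by (simp add: fps_toeplitz_def fps_sum_nth)

lemma fps_toeplitz_X_power: "fps_toeplitz (fps_X ^ c) l l' = (if l = l' + c then 1 else 0)"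
  by (auto simp: fps_toeplitz_def fps_X_power_nth)

lemma fps_toeplitz_tpow_mult_eq_0:
  assumes "\<not> e \<le> enat l"
  shows "fps_toeplitz (tpow e * f) l l' = 0"
proof (cases e)
  case (enat c)
  then have "l < c" using assms by simp
  then show ?thesis using enat by (auto simp: tpow_def fps_toeplitz_def fps_X_power_mult_nth)
qed (simp add: tpow_def fps_toeplitz_def)

definition block_toeplitz :: "'a :: comm_semiring_1 fps mat \<Rightarrow> nat \<times> nat \<Rightarrow> nat \<times> nat \<Rightarrow> 'a" where
  "block_toeplitz A p q = fps_toeplitz (A $$ (fst p, fst q)) (snd p) (snd q)"

lemma block_toeplitz_Pair [simp]:
  "block_toeplitz A (i, l) (j, l') = fps_toeplitz (A $$ (i, j)) l l'"
  by (simp add: block_toeplitz_def)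

lemma block_toeplitz_mult:
  assumes "A \<in> carrier_mat r m" "B \<in> carrier_mat m s" "i < r" "j < s" "l < a"
  shows "block_toeplitz (A * B) (i, l) (j, l') =
    (\<Sum>\<sigma>\<in>{..<m} \<times> {..<a}. block_toeplitz A (i, l) \<sigma> * block_toeplitz B \<sigma> (j, l'))"
proof -
  have "(A * B) $$ (i, j) = (\<Sum>k<m. A $$ (i, k) * B $$ (k, j))"
    using assms by (simp add: index_mult_mat scalar_prod_def atLeast0LessThan)
  then show ?thesis
    using assms(5)
    by (simp add: block_toeplitz_def fps_toeplitz_sum fps_toeplitz_mult sum.cartesian_product split_def)
qed

lemma delta_mat_carrier [simp]: "delta_mat r s lam \<in> carrier_mat r s"
  by (simp add: delta_mat_def)

lemma delta_mat_mult_index: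
  assumes "h \<in> carrier_mat s s" "r \<le> s" "k < r" "j < s"
  shows "(delta_mat r s lam * h) $$ (k, j) = tpow (lam k) * h $$ (s - r + k, j)"
proof -
  have "(delta_mat r s lam * h) $$ (k, j) =
      (\<Sum>j'\<in>{0..<s}. delta_mat r s lam $$ (k, j') * h $$ (j', j))"
    using assms by (simp add: index_mult_mat scalar_prod_def delta_mat_def)
  also have "\<dots> = (\<Sum>j'\<in>{0..<s}. (if j' = s - r + k then tpow (lam k) else 0) * h $$ (j', j))"
    using assms by (intro sum.cong refl) (auto simp: delta_mat_def)
  also have "\<dots> = tpow (lam k) * h $$ (s - r + k, j)"
    using assms by (simp add: if_distrib[of "\<lambda>x. x * _"] sum.delta cong: if_cong)
  finally show ?thesis .
qed

text \<open>Indices (i, l) of the monomials t^l e_i spanning the image of delta_lam modulo t^a.\<close>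

definition trunc_support :: "nat \<Rightarrow> (nat \<Rightarrow> enat) \<Rightarrow> nat \<Rightarrow> (nat \<times> nat) set" where
  "trunc_support r lam a = {(i, l). i < r \<and> lam i \<le> enat l \<and> l < a}"

lemma finite_trunc_support: "finite (trunc_support r lam a)"
  by (rule finite_subset[of _ "{..<r} \<times> {..<a}"]) (auto simp: trunc_support_def)

lemma toeplitz_minor_arc_poly_fun:
  assumes "\<And>p. p < n \<Longrightarrow> fst (row_idx p) < r" "\<And>p. p < n \<Longrightarrow> fst (col_idx p) < s"
  shows "(\<lambda>A. det (mat n n (\<lambda>(p, p'). block_toeplitz A (row_idx p) (col_idx p')))) \<in> arc_poly_fun r s"
proof (rule arc_poly_fun_det)
  fix p p' assume "p < n" "p' < n"
  then have "fst (row_idx p) < r" "fst (col_idx p') < s"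
    using assms by auto
  then show "(\<lambda>A. block_toeplitz A (row_idx p) (col_idx p')) \<in> arc_poly_fun r s"
    by (cases "snd (col_idx p') \<le> snd (row_idx p)")
      (simp_all add: block_toeplitz_def fps_toeplitz_def arc_poly_fun.coord arc_poly_fun.const)
qed

lemma toeplitz_minor_orbit_eq_0:
  assumes rs: "r \<le> s" and B: "B \<in> orbit_arc r s lam" and n: "card (trunc_support r lam a) < n"
    and row_idx: "\<And>p. p < n \<Longrightarrow> fst (row_idx p) < r \<and> snd (row_idx p) < a"
    and col_idx: "\<And>p. p < n \<Longrightarrow> fst (col_idx p) < s"
  shows "det (mat n n (\<lambda>(p, p'). block_toeplitz B (row_idx p) (col_idx p'))) = 0"
proof -
  obtain g h where g: "g \<in> carrier_mat r r" and h: "h \<in> carrier_mat s s"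
    and B_eq: "B = g * (delta_mat r s lam * h)"
  proof -
    obtain g h where "g \<in> carrier_mat r r" "h \<in> carrier_mat s s" "B = g * delta_mat r s lam * h"
      using B unfolding orbit_arc_def by blast
    then show ?thesis
      using that assoc_mult_mat[of g r r "delta_mat r s lam" s h s] by simp
  qed
  have dh: "delta_mat r s lam * h \<in> carrier_mat r s"
    using h by (rule mult_carrier_mat[OF delta_mat_carrier])
  have outside: "block_toeplitz (delta_mat r s lam * h) \<sigma> (j, l') = 0"
    if "\<sigma> \<in> {..<r} \<times> {..<a} - trunc_support r lam a" "j < s" for \<sigma> j l'
  proof -
    obtain k l1 where \<sigma>: "\<sigma> = (k, l1)"
      by fastforce
    with that(1) have "k < r" "\<not> lam k \<le> enat l1"
      by (auto simp: trunc_support_def)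
    with \<sigma> show ?thesis
      using h rs \<open>j < s\<close> by (simp add: delta_mat_mult_index fps_toeplitz_tpow_mult_eq_0)
  qed
  have "block_toeplitz B (row_idx p) (col_idx p') =
      (\<Sum>\<sigma>\<in>trunc_support r lam a.
         block_toeplitz g (row_idx p) \<sigma> * block_toeplitz (delta_mat r s lam * h) \<sigma> (col_idx p'))"
    if "p < n" "p' < n" for p p'
  proof -
    obtain i l j l' where ij: "row_idx p = (i, l)" "col_idx p' = (j, l')"
      by fastforce
    with that row_idx col_idx have "i < r" "l < a" "j < s"
      by force+
    then have "block_toeplitz B (row_idx p) (col_idx p') =
        (\<Sum>\<sigma>\<in>{..<r} \<times> {..<a}.
           block_toeplitz g (i, l) \<sigma> * block_toeplitz (delta_mat r s lam * h) \<sigma> (j, l'))"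
      unfolding B_eq ij using g dh by (intro block_toeplitz_mult)
    also have "\<dots> = (\<Sum>\<sigma>\<in>trunc_support r lam a.
           block_toeplitz g (i, l) \<sigma> * block_toeplitz (delta_mat r s lam * h) \<sigma> (j, l'))"
      using outside \<open>j < s\<close> by (intro sum.mono_neutral_cong_right) (auto simp: trunc_support_def)
    finally show ?thesis
      unfolding ij .
  qed
  then have "mat n n (\<lambda>(p, p'). block_toeplitz B (row_idx p) (col_idx p')) =
      mat n n (\<lambda>(p, p'). \<Sum>\<sigma>\<in>trunc_support r lam a.
         block_toeplitz g (row_idx p) \<sigma> * block_toeplitz (delta_mat r s lam * h) \<sigma> (col_idx p'))"
    by (intro cong_mat) auto
  then show ?thesis
    using det_sum_mult_eq_0_if_card_less[OF finite_trunc_support n] by simp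
qed

text \<open>The column of the Toeplitz matrix of delta_lam matching the row (i, l) of trunc_support,
  as t^l = t^(lam i) t^(l - lam i); on such rows lam i is finite, so the_enat is meaningful.\<close>

definition delta_pivot :: "nat \<Rightarrow> nat \<Rightarrow> (nat \<Rightarrow> enat) \<Rightarrow> nat \<times> nat \<Rightarrow> nat \<times> nat" where
  "delta_pivot r s lam = (\<lambda>(i, l). (s - r + i, l - the_enat (lam i)))"

lemma block_toeplitz_delta_pivot:
  assumes "r \<le> s" "\<sigma> \<in> trunc_support r lam a" "\<tau> \<in> trunc_support r lam a"
  shows "block_toeplitz (delta_mat r s lam) \<sigma> (delta_pivot r s lam \<tau>) = (if \<sigma> = \<tau> then 1 else 0)"
proof -
  obtain i l i' l' where \<sigma>\<tau>: "\<sigma> = (i, l)" "\<tau> = (i', l')"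
    by fastforce
  with assms obtain c' where "i < r" "i' < r" "lam i' = enat c'" "c' \<le> l'"
    by (cases "lam i'") (auto simp: trunc_support_def)
  then show ?thesis
    using assms(1) \<sigma>\<tau>
    by (auto simp: delta_pivot_def delta_mat_def tpow_def fps_toeplitz_X_power fps_toeplitz_def)
qed

lemma toeplitz_minor_delta_eq_1:
  assumes "r \<le> s" and f: "bij_betw f {0..<n} (trunc_support r lam a)"
  shows "det (mat n n (\<lambda>(p, p').
    block_toeplitz (delta_mat r s lam) (f p) (delta_pivot r s lam (f p')))) = 1"
proof -
  have "mat n n (\<lambda>(p, p'). block_toeplitz (delta_mat r s lam) (f p) (delta_pivot r s lam (f p')))
      = 1\<^sub>m n" (is "?M = _")
  proof (rule eq_matI)
    fix p p' assume "p < dim_row (1\<^sub>m n :: complex mat)" "p' < dim_col (1\<^sub>m n :: complex mat)"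
    then have "p \<in> {0..<n}" "p' \<in> {0..<n}"
      by auto
    moreover from this have "f p = f p' \<longleftrightarrow> p = p'"
      using f by (auto simp: bij_betw_def inj_on_def)
    moreover from calculation have "f p \<in> trunc_support r lam a" "f p' \<in> trunc_support r lam a"
      using f by (auto dest: bij_betwE)
    ultimately show "?M $$ (p, p') = 1\<^sub>m n $$ (p, p')"
      using assms(1) by (simp add: block_toeplitz_delta_pivot)
  qed auto
  then show ?thesis
    by simp
qed

lemma delta_mat_in_orbit_arc: "delta_mat r s lam \<in> orbit_arc r s lam"
proof -
  have "invertible_mat (1\<^sub>m r :: complex fps mat)"
    unfolding invertible_mat_def inverts_mat_def by (auto intro!: exI[of _ "1\<^sub>m r"])
  moreover have "delta_mat r s lam = 1\<^sub>m r * delta_mat r s lam * 1\<^sub>m s"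
    using delta_mat_carrier by (metis left_mult_one_mat right_mult_one_mat)
  ultimately show ?thesis
    unfolding orbit_arc_def inverts_mat_def
    by (intro CollectI exI[of _ "1\<^sub>m r"] exI[of _ "1\<^sub>m s"]) auto
qed

lemma card_trunc_support_le_if_orbit_in_closure:
  assumes rs: "r \<le> s"
    and closure: "orbit_arc r s lam' \<subseteq> zariski_closure_arc r s (orbit_arc r s lam)"
  shows "card (trunc_support r lam' a) \<le> card (trunc_support r lam a)"
proof (rule ccontr)
  define n where "n = card (trunc_support r lam' a)"
  assume "\<not> ?thesis"
  then have n: "card (trunc_support r lam a) < n"
    by (simp add: n_def)
  obtain f where f: "bij_betw f {0..<n} (trunc_support r lam' a)"
    using ex_bij_betw_nat_finite[OF finite_trunc_support] n_def by blast
  define minor :: "complex fps mat \<Rightarrow> complex" where "minor A =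
    det (mat n n (\<lambda>(p, p'). block_toeplitz A (f p) (delta_pivot r s lam' (f p'))))" for A
  have f_bounds: "fst (f p) < r \<and> snd (f p) < a" and pivot_bound: "fst (delta_pivot r s lam' (f p)) < s"
    if "p < n" for p
  proof -
    obtain i l where "f p = (i, l)" "i < r" "l < a"
      using bij_betwE[OF f] \<open>p < n\<close> by (fastforce simp: trunc_support_def)
    then show "fst (f p) < r \<and> snd (f p) < a" "fst (delta_pivot r s lam' (f p)) < s"
      using rs by (auto simp: delta_pivot_def)
  qed
  have "minor \<in> arc_poly_fun r s"
    unfolding minor_def using f_bounds pivot_bound by (intro toeplitz_minor_arc_poly_fun) auto
  moreover have "\<forall>B\<in>orbit_arc r s lam. minor B = 0"
    unfolding minor_def using rs n f_bounds pivot_bound by (auto intro: toeplitz_minor_orbit_eq_0)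
  moreover have "delta_mat r s lam' \<in> zariski_closure_arc r s (orbit_arc r s lam)"
    using closure delta_mat_in_orbit_arc by blast
  ultimately have "minor (delta_mat r s lam') = 0"
    by (auto simp: zariski_closure_arc_def)
  then show False
    using toeplitz_minor_delta_eq_1[OF rs f] by (simp add: minor_def)
qed

text \<open>The dimension max(0, a - e) of t^e C[[t]] / t^a C[[t]].\<close>

definition trunc_ideal_dim :: "enat \<Rightarrow> nat \<Rightarrow> nat" where
  "trunc_ideal_dim e a = card {l. e \<le> enat l \<and> l < a}"

lemma card_trunc_support: "card (trunc_support r lam a) = (\<Sum>i<r. trunc_ideal_dim (lam i) a)"
proof -
  have "trunc_support r lam a = Sigma {..<r} (\<lambda>i. {l. lam i \<le> enat l \<and> l < a})"
    by (auto simp: trunc_support_def)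
  then show ?thesis
    by (simp add: trunc_ideal_dim_def card_SigmaI)
qed

lemma trunc_ideal_dim_eq_0:
  assumes "enat a \<le> e"
  shows "trunc_ideal_dim e a = 0"
proof -
  have "\<not> (e \<le> enat l \<and> l < a)" for l
    using order.trans[OF assms, of "enat l"] by auto
  then show ?thesis
    by (simp add: trunc_ideal_dim_def)
qed

lemma trunc_ideal_dim_le: "trunc_ideal_dim e a \<le> a"
  unfolding trunc_ideal_dim_def by (rule card_mono[of "{..<a}", simplified]) auto

lemma enat_le_plus_trunc_ideal_dim: "enat a \<le> e + enat (trunc_ideal_dim e a)"
proof (cases e)
  case (enat c)
  then have "{l. e \<le> enat l \<and> l < a} = {c..<a}"
    by auto
  then show ?thesis
    using enat by (simp add: trunc_ideal_dim_def)
qed simp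

lemma plus_trunc_ideal_dim_eq:
  assumes "e \<le> enat a"
  shows "e + enat (trunc_ideal_dim e a) = enat a"
proof -
  obtain c where c: "e = enat c" "c \<le> a"
    using assms by (cases e) auto
  then have "{l. e \<le> enat l \<and> l < a} = {c..<a}"
    by auto
  then show ?thesis
    using c by (simp add: trunc_ideal_dim_def)
qed

lemma sum_enat: "(\<Sum>i\<in>I. enat (f i)) = enat (\<Sum>i\<in>I. f i)"
  by (induction I rule: infinite_finite_induct) (auto simp: zero_enat_def)

lemma sum_plus_trunc_ideal_dims:
  "(\<Sum>i\<in>I. e i) + enat (\<Sum>i\<in>I. trunc_ideal_dim (e i) a) = (\<Sum>i\<in>I. e i + enat (trunc_ideal_dim (e i) a))"
  by (simp add: sum.distrib sum_enat)

lemma enat_card_mult_le_sum_plus_trunc_ideal_dims: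
  "enat (card I * a) \<le> (\<Sum>i\<in>I. e i) + enat (\<Sum>i\<in>I. trunc_ideal_dim (e i) a)"
proof -
  have "enat (card I * a) = (\<Sum>i\<in>I. enat a)"
    by (simp add: of_nat_eq_enat)
  also have "\<dots> \<le> (\<Sum>i\<in>I. e i + enat (trunc_ideal_dim (e i) a))"
    by (intro sum_mono enat_le_plus_trunc_ideal_dim)
  finally show ?thesis
    by (simp only: sum_plus_trunc_ideal_dims)
qed

lemma sum_plus_trunc_ideal_dims_eq:
  assumes "\<And>i. i \<in> I \<Longrightarrow> e i \<le> enat a"
  shows "(\<Sum>i\<in>I. e i) + enat (\<Sum>i\<in>I. trunc_ideal_dim (e i) a) = enat (card I * a)"
proof -
  have "(\<Sum>i\<in>I. e i + enat (trunc_ideal_dim (e i) a)) = (\<Sum>i\<in>I. enat a)"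
    using assms by (intro sum.cong refl plus_trunc_ideal_dim_eq)
  then show ?thesis
    by (simp add: sum_plus_trunc_ideal_dims of_nat_eq_enat)
qed

lemma pre_partitionD: "pre_partition r lam \<Longrightarrow> i \<le> j \<Longrightarrow> j < r \<Longrightarrow> lam j \<le> lam i"
  by (simp add: pre_partition_def)

lemma sum_lessThan_eq_sum_tail:
  fixes r i0 :: nat
  assumes "\<And>i. i < i0 \<Longrightarrow> f i = 0"
  shows "(\<Sum>i<r. f i) = (\<Sum>i = i0..<r. f i)"
  using assms by (intro sum.mono_neutral_cong_right) auto

lemma tail_sum_le_if_trunc_ideal_dims_le:
  assumes lam: "pre_partition r lam" and "i0 < r" and lam_i0: "lam i0 = enat a"
    and dims: "(\<Sum>i<r. trunc_ideal_dim (lam' i) a) \<le> (\<Sum>i<r. trunc_ideal_dim (lam i) a)"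
  shows "(\<Sum>i = i0..<r. lam i) \<le> (\<Sum>i = i0..<r. lam' i)"
proof -
  define D where "D = (\<Sum>i = i0..<r. trunc_ideal_dim (lam i) a)"
  have "trunc_ideal_dim (lam i) a = 0" if "i < i0" for i
    using that pre_partitionD[OF lam, of i i0] \<open>i0 < r\<close> lam_i0 by (simp add: trunc_ideal_dim_eq_0)
  then have D_eq: "(\<Sum>i<r. trunc_ideal_dim (lam i) a) = D"
    unfolding D_def by (rule sum_lessThan_eq_sum_tail)
  have "(\<Sum>i = i0..<r. lam i) + enat D = enat (card {i0..<r} * a)"
    unfolding D_def using pre_partitionD[OF lam, of i0] lam_i0
    by (intro sum_plus_trunc_ideal_dims_eq) auto
  also have "\<dots> \<le> (\<Sum>i = i0..<r. lam' i) + enat (\<Sum>i = i0..<r. trunc_ideal_dim (lam' i) a)"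
    by (rule enat_card_mult_le_sum_plus_trunc_ideal_dims)
  also have "\<dots> \<le> (\<Sum>i = i0..<r. lam' i) + enat D"
  proof -
    have "(\<Sum>i = i0..<r. trunc_ideal_dim (lam' i) a) \<le> (\<Sum>i<r. trunc_ideal_dim (lam' i) a)"
      by (rule sum_mono2) auto
    then show ?thesis
      using dims D_eq by (intro add_left_mono) simp
  qed
  finally show ?thesis
    by (simp add: add.commute[of _ "enat D"])
qed

lemma infinite_if_trunc_ideal_dims_le:
  assumes lam: "pre_partition r lam" and lam': "pre_partition r lam'"
    and "i0 < r" and lam_i0: "lam i0 = \<infinity>"
    and dims: "\<And>a. (\<Sum>i<r. trunc_ideal_dim (lam' i) a) \<le> (\<Sum>i<r. trunc_ideal_dim (lam i) a)"
  shows "lam' i0 = \<infinity>"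
proof (rule ccontr)
  define k where "k = r - i0"
  have k: "card {i0..<r} = k" "card {Suc i0..<r} = k - 1"
    by (simp_all add: k_def)
  assume "lam' i0 \<noteq> \<infinity>"
  then obtain b where b: "lam' i0 = enat b"
    by auto
  have tail_le: "lam' i \<le> enat b" if "i \<in> {i0..<r}" for i
    using that pre_partitionD[OF lam', of i0 i] b by simp
  have "(\<Sum>i = i0..<r. lam' i) \<le> (\<Sum>i = i0..<r. enat b)"
    using tail_le by (rule sum_mono)
  then obtain c where c: "(\<Sum>i = i0..<r. lam' i) = enat c"
    by (cases "\<Sum>i = i0..<r. lam' i") (auto simp: of_nat_eq_enat)
  \<comment> \<open>At an order a above the tail sum c, the tail of lam' accounts for k a - c monomials,
    while lam, infinite up to i0, has at most (k - 1) a of them.\<close>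
  define a where "a = Suc c"
  have "lam' i \<le> enat a" if "i \<in> {i0..<r}" for i
  proof -
    have "lam' i \<le> enat c"
      using member_le_sum[of i "{i0..<r}" lam'] that c by simp
    then show ?thesis
      by (rule order_trans) (simp add: a_def)
  qed
  then have "enat c + enat (\<Sum>i = i0..<r. trunc_ideal_dim (lam' i) a) = enat (k * a)"
    using sum_plus_trunc_ideal_dims_eq[of "{i0..<r}" lam' a] c k by simp
  then have "k * a = c + (\<Sum>i = i0..<r. trunc_ideal_dim (lam' i) a)"
    by simp
  also have "(\<Sum>i = i0..<r. trunc_ideal_dim (lam' i) a) \<le> (\<Sum>i<r. trunc_ideal_dim (lam' i) a)"
    by (rule sum_mono2) auto
  also have "\<dots> \<le> (\<Sum>i<r. trunc_ideal_dim (lam i) a)"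
    by (rule dims)
  also have "\<dots> = (\<Sum>i = Suc i0..<r. trunc_ideal_dim (lam i) a)"
    using pre_partitionD[OF lam, of _ i0] \<open>i0 < r\<close> lam_i0
    by (intro sum_lessThan_eq_sum_tail) (simp add: trunc_ideal_dim_eq_0)
  also have "\<dots> \<le> (k - 1) * a"
    using sum_mono[of "{Suc i0..<r}" "\<lambda>i. trunc_ideal_dim (lam i) a" "\<lambda>_. a"] k
    by (simp add: trunc_ideal_dim_le)
  finally have "k * a \<le> c + (k - 1) * a"
    by simp
  moreover have "k * a = a + (k - 1) * a"
    using \<open>i0 < r\<close> by (cases k) (auto simp: k_def)
  ultimately show False
    by (simp add: a_def)
qed

lemma tail_dominated_if_trunc_ideal_dims_le:
  assumes lam: "pre_partition r lam" and lam': "pre_partition r lam'"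
    and dims: "\<And>a. (\<Sum>i<r. trunc_ideal_dim (lam' i) a) \<le> (\<Sum>i<r. trunc_ideal_dim (lam i) a)"
  shows "tail_dominated r lam lam'"
  unfolding tail_dominated_def
proof (intro allI impI)
  fix i0 assume "i0 < r"
  show "(\<Sum>i = i0..<r. lam i) \<le> (\<Sum>i = i0..<r. lam' i)"
  proof (cases "lam i0")
    case (enat a)
    then show ?thesis
      using tail_sum_le_if_trunc_ideal_dims_le[OF lam \<open>i0 < r\<close> _ dims] by simp
  next
    case infinity
    then have "lam' i0 = \<infinity>"
      using infinite_if_trunc_ideal_dims_le[OF lam lam' \<open>i0 < r\<close> _ dims] by simp
    then have "(\<Sum>i = i0..<r. lam' i) = \<infinity>"
      using member_le_sum[of i0 "{i0..<r}" lam'] \<open>i0 < r\<close> by simp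
    then show ?thesis
      by simp
  qed
qed

theorem proposition4p2:
  fixes r s :: nat and lam lam' :: "nat \<Rightarrow> enat"
  assumes "r \<le> s"
    and "pre_partition r lam" and "pre_partition r lam'"
    and "orbit_arc r s lam' \<subseteq> zariski_closure_arc r s (orbit_arc r s lam)"
  shows "tail_dominated r lam lam'"
proof (rule tail_dominated_if_trunc_ideal_dims_le[OF assms(2,3)])
  fix a
  show "(\<Sum>i<r. trunc_ideal_dim (lam' i) a) \<le> (\<Sum>i<r. trunc_ideal_dim (lam i) a)"
    using card_trunc_support_le_if_orbit_in_closure[OF assms(1,4)] by (simp add: card_trunc_support)
qed

end
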